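(* Let $z\in Z_0$. The element $\tilde z(z)=(\tilde\rho,\tilde v,\tilde m,\tilde\sigma,\tilde p)\in Z$ defined by $\tilde\rho:=1$, $\tilde v:=\frac{m-\rho v}{1-\rho^2}$, $\tilde m:=v-\rho\tilde v$, and $\tilde\sigma+\tilde p\,\mathrm{Id}:=\tilde m\otimes\tilde v+\tilde v\otimes\tilde m$ (i.e. $\tilde\sigma$ is the trace-free part and $\tilde p$ is $\frac1n$ times the trace of the right-hand side) belongs to $\Lambda$, and for every $t\in(-1-\rho,1-\rho)$ there holds $\tilde z(z+t\tilde z(z))=\tilde z(z)$, $T_\pm(z+t\tilde z(z))=T_\pm(z)$, and $M(z+t\tilde z(z))^\circ=M(z)^\circ$.
   Context: Let $n\ge2$, $\mathcal S_0^{n\times n}$ the trace-free symmetric matrices, $Z:=\mathbb{R}\times\mathbb{R}^n\times\mathbb{R}^n\times\mathcal S_0^{n\times n}\times\mathbb{R}$ with elements $z=(\rho,v,m,\sigma,p)$, $Z_0:=\{z:\rho\in(-1,1)\}$. For $z\in Z_0$: $M(z)=\frac{v\otimes v-\rho(m\otimes v+v\otimes m)+m\otimes m}{1-\rho^2}-\sigma$, $T_\pm(z)=\frac{|m\pm v|^2}{n(\rho\pm1)^2}$; for a symmetric matrix $S$, $S^\circ:=S-\frac1n\mathrm{tr}(S)\mathrm{Id}$. Wave cone: $M_\Lambda(\bar z):=\begin{pmatrix}\bar\sigma+\bar p\,\mathrm{Id}&\bar v\\ \bar v^T&0\\ \bar m^T&\bar\rho\end{pmatrix}$, $\Lambda:=\{\bar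 z\in Z:\ker M_\Lambda(\bar z)\ne\{0\},(\bar\rho,\bar v)\ne0\}$. *)

theory Defs
  imports "HOL-Analysis.Analysis"
begin

type_synonym 'n zelem = "real \<times> (real^'n) \<times> (real^'n) \<times> (real^'n^'n) \<times> real"

definition outer :: "real^'n \<Rightarrow> real^'n \<Rightarrow> real^'n^'n" where
  "outer u w = (\<chi> i j. u$i * w$j)"

definition mtrace :: "(real^'n^'n::finite) \<Rightarrow> real" where
  "mtrace A = (\<Sum>i\<in>UNIV. A$i$i)"

definition trfree :: "(real^'n^'n::finite) \<Rightarrow> real^'n^'n" where
  "trfree S = S - (mtrace S / real CARD('n)) *\<^sub>R mat 1"

definition Zset :: "('n::finite) zelem set" where
  "Zset = {(\<rho>, v, m, \<sigma>, p). transpose \<sigma> = \<sigma> \<and> mtrace \<sigma> = 0}"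

definition Z0 :: "('n::finite) zelem set" where
  "Z0 = {z \<in> Zset. fst z \<in> {-1<..<1}}"

definition Mfun :: "('n::finite) zelem \<Rightarrow> real^'n^'n" where
  "Mfun z = (case z of (\<rho>, v, m, \<sigma>, p) \<Rightarrow>
     (1 / (1 - \<rho>^2)) *\<^sub>R (outer v v - \<rho> *\<^sub>R (outer m v + outer v m) + outer m m) - \<sigma>)"

definition Tplus :: "('n::finite) zelem \<Rightarrow> real" where
  "Tplus z = (case z of (\<rho>, v, m, \<sigma>, p) \<Rightarrow>
     (norm (m + v))^2 / (real CARD('n) * (\<rho> + 1)^2))"

definition Tminus :: "('n::finite) zelem \<Rightarrow> real" where
  "Tminus z = (case z of (\<rho>, v, m, \<sigma>, p) \<Rightarrow>
     (norm (m - v))^2 / (real CARD('n) * (\<rho> - 1)^2))"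

text \<open>ker M_Lambda(zb) nontrivial, where M_Lambda(zb) is the (n+2) x (n+1) matrix
  [[sigma + p Id, v], [v^T, 0], [m^T, rho]], acting on (x, s) in R^n x R.\<close>
definition ker_MLambda_nontrivial :: "('n::finite) zelem \<Rightarrow> bool" where
  "ker_MLambda_nontrivial zb = (case zb of (\<rho>, v, m, \<sigma>, p) \<Rightarrow>
     (\<exists>(x::real^'n) (s::real). (x, s) \<noteq> 0 \<and>
        (\<sigma> + p *\<^sub>R mat 1) *v x + s *\<^sub>R v = 0 \<and>
        v \<bullet> x = 0 \<and>
        m \<bullet> x + \<rho> * s = 0))"

definition Lambda :: "('n::finite) zelem set" where
  "Lambda = {zb \<in> Zset. ker_MLambda_nontrivial zb \<and> (fst zb, fst (snd zb)) \<noteq> 0}"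

definition ztilde :: "('n::finite) zelem \<Rightarrow> 'n zelem" where
  "ztilde z = (case z of (\<rho>, v, m, \<sigma>, p) \<Rightarrow>
     (let vt = (1 / (1 - \<rho>^2)) *\<^sub>R (m - \<rho> *\<^sub>R v);
          mt = v - \<rho> *\<^sub>R vt;
          S = outer mt vt + outer vt mt
      in (1, vt, mt, trfree S, mtrace S / real CARD('n))))"

end

theory Submission
  imports Defs
begin

(* Since 1 - \<rho>^2 \<noteq> 0, every z \<in> Z0 can be written as z = (\<rho>, a + \<rho> b, b + \<rho> a, \<sigma>, p),
   and then ztilde z = (1, b, a, S\<^sup>\<circ>, tr S / n) with S = a \<otimes> b + b \<otimes> a depends on a, b only.
   Adding t ztilde z keeps a, b and moves \<rho> to \<rho> + t, so ztilde is constant along the line.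
   T\<^sub>\<plusminus> are |a \<plusminus> b|^2 / n, and M = a \<otimes> a + b \<otimes> b + \<rho> S - \<sigma> changes by t (S - S\<^sup>\<circ>), a multiple
   of Id.  Finally ztilde z \<in> \<Lambda>: for x \<noteq> 0 orthogonal to b (here n \<ge> 2 is used) we have
   S x = (a \<bullet> x) b, so (x, -(a \<bullet> x)) lies in the kernel. *)

definition zline :: "real \<Rightarrow> real^'n \<Rightarrow> real^'n \<Rightarrow> real^'n^'n \<Rightarrow> real \<Rightarrow> ('n::finite) zelem" where
  "zline \<rho> a b \<sigma> p = (\<rho>, a + \<rho> *\<^sub>R b, b + \<rho> *\<^sub>R a, \<sigma>, p)"

definition outer_sym :: "real^'n \<Rightarrow> real^'n \<Rightarrow> real^'n^'n" where
  "outer_sym a b = outer a b + outer b a"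

definition zdir :: "real^'n \<Rightarrow> real^'n \<Rightarrow> ('n::finite) zelem" where
  "zdir a b = (1, b, a, trfree (outer_sym a b), mtrace (outer_sym a b) / real CARD('n))"

lemma outer_mult_vec: "outer a b *v x = (b \<bullet> x) *\<^sub>R a"
  by (simp add: vec_eq_iff outer_def matrix_vector_mult_def inner_vec_def sum_distrib_left
      mult.commute mult.left_commute)

lemma transpose_outer_sym: "transpose (outer_sym a b) = outer_sym a b"
  by (simp add: transpose_def outer_sym_def outer_def vec_eq_iff)

lemma mtrace_add: "mtrace (A + B) = mtrace A + mtrace B"
  by (simp add: mtrace_def sum.distrib)

lemma mtrace_scaleR: "mtrace (c *\<^sub>R A) = c * mtrace A"
  by (simp add: mtrace_def sum_distrib_left)

lemma mtrace_mat_1: "mtrace (mat 1 :: real^'n^'n::finite) = real CARD('n)"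
  by (simp add: mtrace_def mat_def)

lemma mtrace_trfree: "mtrace (trfree (A::real^'n^'n::finite)) = 0"
  by (simp add: trfree_def mtrace_def sum_subtractf mat_def)

lemma transpose_trfree: "transpose A = A \<Longrightarrow> transpose (trfree A) = trfree A"
  by (simp add: trfree_def transpose_def vec_eq_iff mat_def)

lemma trfree_add_scaleR_mat_1: "trfree (A + c *\<^sub>R (mat 1 :: real^'n^'n::finite)) = trfree A"
  by (simp add: trfree_def mtrace_add mtrace_scaleR mtrace_mat_1 algebra_simps add_divide_distrib
      scaleR_add_left)

lemma trfree_plus_trace_part: "trfree A + (mtrace A / real CARD('n)) *\<^sub>R mat 1 = (A::real^'n^'n::finite)"
  by (simp add: trfree_def)

lemma zline_exists:
  assumes "\<rho>^2 \<noteq> 1"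
  obtains a b where "(\<rho>, v, m, \<sigma>, p) = zline \<rho> a b \<sigma> p"
proof
  define b where "b = (1 / (1 - \<rho>^2)) *\<^sub>R (m - \<rho> *\<^sub>R v)"
  have "(1 - \<rho>^2) *\<^sub>R b = m - \<rho> *\<^sub>R v"
    using assms by (simp add: b_def)
  then have "b + \<rho> *\<^sub>R (v - \<rho> *\<^sub>R b) = m"
    by (simp add: algebra_simps power2_eq_square)
  then show "(\<rho>, v, m, \<sigma>, p) = zline \<rho> (v - \<rho> *\<^sub>R b) b \<sigma> p"
    by (simp add: zline_def)
qed

lemma ztilde_zline:
  fixes a b :: "real^'n::finite"
  assumes "\<rho>^2 \<noteq> 1"
  shows "ztilde (zline \<rho> a b \<sigma> p) = zdir a b"
proof -
  have "b + \<rho> *\<^sub>R a - \<rho> *\<^sub>R (a + \<rho> *\<^sub>R b) = (1 - \<rho>^2) *\<^sub>R b"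
    by (simp add: algebra_simps power2_eq_square)
  then have "(1 / (1 - \<rho>^2)) *\<^sub>R (b + \<rho> *\<^sub>R a - \<rho> *\<^sub>R (a + \<rho> *\<^sub>R b)) = b"
    using assms by simp
  then show ?thesis
    unfolding ztilde_def zline_def prod.case Let_def by (simp add: zdir_def outer_sym_def)
qed

lemma zline_add_zdir:
  fixes a b :: "real^'n::finite"
  shows "zline \<rho> a b \<sigma> p + t *\<^sub>R zdir a b =
     zline (\<rho> + t) a b (\<sigma> + t *\<^sub>R trfree (outer_sym a b))
       (p + t * (mtrace (outer_sym a b) / real CARD('n)))"
  by (simp add: zline_def zdir_def algebra_simps)

lemma Mfun_zline:
  fixes a b :: "real^'n::finite"
  assumes "\<rho>^2 \<noteq> 1"
  shows "Mfun (zline \<rho> a b \<sigma> p) = outer a a + outer b b + \<rho> *\<^sub>R outer_sym a b - \<sigma>"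
proof -
  have "(a1 + \<rho> * b1) * (a2 + \<rho> * b2)
      - \<rho> * ((b1 + \<rho> * a1) * (a2 + \<rho> * b2) + (a1 + \<rho> * b1) * (b2 + \<rho> * a2))
      + (b1 + \<rho> * a1) * (b2 + \<rho> * a2)
      = (1 - \<rho>^2) * (a1 * a2 + b1 * b2 + \<rho> * (a1 * b2 + b1 * a2))" for a1 a2 b1 b2 :: real
    by (simp add: algebra_simps power2_eq_square)
  then show ?thesis
    using assms by (simp add: Mfun_def zline_def outer_sym_def outer_def vec_eq_iff)
qed

lemma Tplus_zline:
  fixes a b :: "real^'n::finite"
  assumes "\<rho> \<noteq> -1"
  shows "Tplus (zline \<rho> a b \<sigma> p) = (norm (a + b))^2 / real CARD('n::finite)"
proof -
  have "b + \<rho> *\<^sub>R a + (a + \<rho> *\<^sub>R b) = (\<rho> + 1) *\<^sub>R (a + b)"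
    by (simp add: algebra_simps)
  moreover have "(\<rho> + 1)^2 \<noteq> 0"
    using assms by simp
  ultimately show ?thesis
    by (simp add: Tplus_def zline_def power_mult_distrib)
qed

lemma Tminus_zline:
  fixes a b :: "real^'n::finite"
  assumes "\<rho> \<noteq> 1"
  shows "Tminus (zline \<rho> a b \<sigma> p) = (norm (b - a))^2 / real CARD('n::finite)"
proof -
  have "b + \<rho> *\<^sub>R a - (a + \<rho> *\<^sub>R b) = (1 - \<rho>) *\<^sub>R (b - a)"
    by (simp add: algebra_simps)
  moreover have "(\<rho> - 1)^2 \<noteq> 0"
    using assms by simp
  ultimately show ?thesis
    by (simp add: Tminus_def zline_def power_mult_distrib power2_commute)
qed

lemma trfree_Mfun_zline_shift:
  fixes a b :: "real^'n::finite"
  assumes "\<rho>^2 \<noteq> 1" "(\<rho> + t)^2 \<noteq> 1"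
  shows "trfree (Mfun (zline (\<rho> + t) a b (\<sigma> + t *\<^sub>R trfree (outer_sym a b)) p')) =
    trfree (Mfun (zline \<rho> a b \<sigma> p))"
proof -
  let ?S = "outer_sym a b"
  have "Mfun (zline (\<rho> + t) a b (\<sigma> + t *\<^sub>R trfree ?S) p') =
      Mfun (zline \<rho> a b \<sigma> p) + t *\<^sub>R (?S - trfree ?S)"
    using assms by (simp add: Mfun_zline algebra_simps)
  also have "?S - trfree ?S = (mtrace ?S / real CARD('n)) *\<^sub>R mat 1"
    by (simp add: trfree_def)
  finally show ?thesis
    by (simp add: trfree_add_scaleR_mat_1)
qed

lemma zdir_in_Lambda:
  assumes "CARD('n::finite) \<ge> 2"
  shows "zdir a b \<in> (Lambda :: 'n zelem set)"
proof -
  obtain x :: "real^'n" where x: "x \<noteq> 0" "b \<bullet> x = 0"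
    using orthogonal_to_vector_exists[of b] assms by (auto simp: orthogonal_def)
  let ?S = "outer_sym a b"
  have "?S *v x = (a \<bullet> x) *\<^sub>R b"
    using x by (simp add: outer_sym_def matrix_vector_mult_add_rdistrib outer_mult_vec inner_commute)
  then have "(trfree ?S + (mtrace ?S / real CARD('n)) *\<^sub>R mat 1) *v x + (- (a \<bullet> x)) *\<^sub>R b = 0"
    by (simp only: trfree_plus_trace_part) simp
  moreover have "(x, - (a \<bullet> x)) \<noteq> 0"
    using x by (simp add: zero_prod_def)
  ultimately have "ker_MLambda_nontrivial (zdir a b)"
    unfolding ker_MLambda_nontrivial_def zdir_def prod.case using x
    by (intro exI[of _ x] exI[of _ "- (a \<bullet> x)"]) simp
  moreover have "zdir a b \<in> Zset"
    by (simp add: zdir_def Zset_def transpose_trfree transpose_outer_sym mtrace_trfree)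
  ultimately show ?thesis
    by (simp add: Lambda_def zdir_def zero_prod_def)
qed

theorem lemma3p9:
  fixes z :: "'n::finite zelem"
  assumes "CARD('n) \<ge> 2"
    and "z \<in> Z0"
  shows "ztilde z \<in> Lambda \<and>
    (\<forall>t::real. -1 - fst z < t \<and> t < 1 - fst z \<longrightarrow>
       ztilde (z + t *\<^sub>R ztilde z) = ztilde z \<and>
       Tplus (z + t *\<^sub>R ztilde z) = Tplus z \<and>
       Tminus (z + t *\<^sub>R ztilde z) = Tminus z \<and>
       trfree (Mfun (z + t *\<^sub>R ztilde z)) = trfree (Mfun z))"
proof -
  have square_neq_1: "r^2 \<noteq> 1" if "-1 < r" "r < 1" for r :: real
    using that by (simp add: power2_eq_1_iff)
  obtain \<rho> v m \<sigma> p where z: "z = (\<rho>, v, m, \<sigma>, p)"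
    by (cases z) auto
  with assms(2) have \<rho>: "-1 < \<rho>" "\<rho> < 1"
    by (auto simp: Z0_def)
  then obtain a b where zl: "z = zline \<rho> a b \<sigma> p"
    using zline_exists square_neq_1 z by metis
  have zt: "ztilde z = zdir a b"
    using \<rho> zl square_neq_1 ztilde_zline by metis
  have "ztilde (z + t *\<^sub>R ztilde z) = ztilde z \<and>
       Tplus (z + t *\<^sub>R ztilde z) = Tplus z \<and>
       Tminus (z + t *\<^sub>R ztilde z) = Tminus z \<and>
       trfree (Mfun (z + t *\<^sub>R ztilde z)) = trfree (Mfun z)"
    if "-1 - fst z < t" "t < 1 - fst z" for t
  proof -
    have "-1 < \<rho> + t" "\<rho> + t < 1"
      using that z by auto
    then show ?thesis
      unfolding zt unfolding zl zline_add_zdir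
      using \<rho> square_neq_1
      by (simp add: ztilde_zline Tplus_zline Tminus_zline trfree_Mfun_zline_shift)
  qed
  then show ?thesis
    using zt zdir_in_Lambda[OF assms(1)] by simp
qed

end
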